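(* Let $X$ be a connected separable $T_1$-space. Then for all but countably many points $x \in X$, the subspace $X\setminus\{x\}$ has at most two connected components. *)

theory Defs
  imports "HOL-Analysis.Analysis"
begin

end

theory Submission
  imports Defs
begin

text \<open>If X - {x} is not the union of at most two connected components, it splits into three
  nonempty disjoint open sets U1, U2, U3 (X - {x} is open as X is T1); mark each of them by a
  point of a fixed countable dense set. Two distinct points x, y cannot receive the same marks:
  y lies in some Ui, so the connected set X - Ui avoids y but meets two of the three pieces of
  X - {y}. Hence the bad points inject into the countable set of triples of marks.\<close>

definition open_tripartition :: "'a topology \<Rightarrow> 'a set \<Rightarrow> 'a set \<Rightarrow> 'a set \<Rightarrow> 'a set \<Rightarrow> bool" where
  "open_tripartition X W U1 U2 U3 \<longleftrightarrow> openin X U1 \<and> openin X U2 \<and> openin X U3 \<and>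
     U1 \<inter> U2 = {} \<and> U1 \<inter> U3 = {} \<and> U2 \<inter> U3 = {} \<and>
     U1 \<noteq> {} \<and> U2 \<noteq> {} \<and> U3 \<noteq> {} \<and> U1 \<union> U2 \<union> U3 = W"

lemma open_tripartition_swap12:
  "open_tripartition X W U1 U2 U3 \<Longrightarrow> open_tripartition X W U2 U1 U3"
  unfolding open_tripartition_def by blast

lemma open_tripartition_swap13:
  "open_tripartition X W U1 U2 U3 \<Longrightarrow> open_tripartition X W U3 U2 U1"
  unfolding open_tripartition_def by blast

lemma finite_card_le_2_if_subset_doubleton:
  assumes "S \<subseteq> {a, b}"
  shows "finite S \<and> card S \<le> 2"
proof
  show "finite S"
    using assms finite_subset by blast
  have "card S \<le> card {a, b}"
    using assms by (intro card_mono) auto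
  also have "\<dots> \<le> 2"
    by (simp add: card_insert_if)
  finally show "card S \<le> 2" .
qed

lemma connected_components_of_subset_open_partition:
  assumes "openin Y A" "openin Y B" "A \<union> B = topspace Y" "A \<inter> B = {}"
    and "connectedin Y A" "connectedin Y B"
  shows "connected_components_of Y \<subseteq> {A, B}"
proof
  fix C
  assume C: "C \<in> connected_components_of Y"
  have "separatedin Y A B"
    using assms(1,2,4) by (simp add: separatedin_open_sets disjnt_def)
  moreover have "C \<subseteq> A \<union> B"
    using connected_components_of_subset[OF C] assms(3) by simp
  ultimately have "C \<subseteq> A \<or> C \<subseteq> B"
    using connectedin_subset_separated_union connectedin_connected_components_of[OF C] by blast
  moreover have "C \<noteq> {}"
    using nonempty_connected_components_of[OF C] .
  ultimately show "C \<in> {A, B}"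
    using connected_components_of_maximal[OF C] assms(5,6)
    by (metis disjnt_def inf.absorb1 insertCI subset_antisym)
qed

lemma open_tripartition_split_disconnected:
  assumes P: "openin X P" "\<not> connectedin X P" and Q: "openin X Q" "Q \<noteq> {}"
    and PQ: "P \<union> Q = W" "P \<inter> Q = {}"
  obtains U1 U2 U3 where "open_tripartition X W U1 U2 U3"
proof -
  obtain E1 E2 where E: "openin X E1" "openin X E2" "P \<subseteq> E1 \<union> E2" "E1 \<inter> E2 \<inter> P = {}"
    "E1 \<inter> P \<noteq> {}" "E2 \<inter> P \<noteq> {}"
    using P(2) openin_subset[OF P(1)] unfolding connectedin by blast
  have "openin X (E1 \<inter> P)" "openin X (E2 \<inter> P)"
    using E(1,2) P(1) by (auto intro: openin_Int)
  then have "open_tripartition X W (E1 \<inter> P) (E2 \<inter> P) Q"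
    unfolding open_tripartition_def using E(3-6) Q PQ by blast
  then show thesis
    by (rule that)
qed

lemma open_tripartition_if_many_components:
  assumes W: "openin X W"
    and many: "\<not> (finite (connected_components_of (subtopology X W))
                 \<and> card (connected_components_of (subtopology X W)) \<le> 2)"
  obtains U1 U2 U3 where "open_tripartition X W U1 U2 U3"
proof -
  let ?Y = "subtopology X W"
  have topY: "topspace ?Y = W"
    using openin_subset[OF W] by auto
  have "\<not> connected_space ?Y"
  proof
    assume "connected_space ?Y"
    then obtain C where "connected_components_of ?Y \<subseteq> {C}"
      using connected_space_iff_components_subset_singleton by blast
    then have "connected_components_of ?Y \<subseteq> {C, C}"
      by simp
    from finite_card_le_2_if_subset_doubleton[OF this] many show False
      by contradiction
  qed
  then obtain A B where AB: "openin ?Y A" "openin ?Y B" "A \<union> B = W" "A \<inter> B = {}"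
    "A \<noteq> {}" "B \<noteq> {}"
    unfolding connected_space_eq topY by blast
  have open_AB: "openin X A" "openin X B"
    using AB(1,2) by (simp_all add: openin_open_subtopology[OF W])
  have "\<not> (connectedin ?Y A \<and> connectedin ?Y B)"
  proof
    assume "connectedin ?Y A \<and> connectedin ?Y B"
    then have "connected_components_of ?Y \<subseteq> {A, B}"
      using AB(1-4) topY by (intro connected_components_of_subset_open_partition) auto
    from finite_card_le_2_if_subset_doubleton[OF this] many show False
      by contradiction
  qed
  moreover have "A \<subseteq> W" "B \<subseteq> W"
    using AB(3) by auto
  ultimately consider "\<not> connectedin X A" | "\<not> connectedin X B"
    by (auto simp: connectedin_subtopology)
  then show thesis
  proof cases
    case 1
    show thesis
      using that by (rule open_tripartition_split_disconnected[OF open_AB(1) 1 open_AB(2) AB(6,3,4)])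
  next
    case 2
    have "B \<union> A = W" "B \<inter> A = {}"
      using AB(3,4) by auto
    then show thesis
      using that by (rule open_tripartition_split_disconnected[OF open_AB(2) 2 open_AB(1) AB(5)])
  qed
qed

text \<open>A separation of X - U would cut off a part avoiding x that is clopen in X.\<close>

lemma connectedin_diff_open_piece:
  assumes X: "connected_space X" and x: "x \<in> topspace X"
    and U: "openin X U" and V: "openin X V"
    and UV: "U \<inter> V = {}" "U \<union> V = topspace X - {x}"
  shows "connectedin X (topspace X - U)"
proof -
  let ?T = "topspace X - U"
  have T: "?T = insert x V"
    using UV x openin_subset[OF U] by blast
  have closed_T: "closedin X ?T"
    using closedin_topspace U by (rule closedin_diff)
  have no_split: False
    if F: "openin X F1" "openin X F2" "x \<in> F1"
      "?T \<subseteq> F1 \<union> F2" "F1 \<inter> F2 \<inter> ?T = {}" "F2 \<inter> ?T \<noteq> {}" for F1 F2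
  proof -
    have "x \<notin> F2"
      using F(3,5) T by auto
    then have piece: "F2 \<inter> V = F2 \<inter> ?T"
      unfolding T by auto
    also have "\<dots> = ?T - F1"
      using F(4,5) by auto
    finally have "openin X (F2 \<inter> V) \<and> closedin X (F2 \<inter> V)"
      using openin_Int[OF F(2) V] closedin_diff[OF closed_T F(1)] by simp
    then have "F2 \<inter> V = {} \<or> F2 \<inter> V = topspace X"
      using X by (simp add: connected_space_clopen_in)
    then show False
      using piece F(6) \<open>x \<notin> F2\<close> x by auto
  qed
  show ?thesis
    unfolding connectedin
  proof (intro conjI notI)
    assume "\<exists>E1 E2. openin X E1 \<and> openin X E2 \<and> ?T \<subseteq> E1 \<union> E2 \<and> E1 \<inter> E2 \<inter> ?T = {}
      \<and> E1 \<inter> ?T \<noteq> {} \<and> E2 \<inter> ?T \<noteq> {}"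
    then obtain E1 E2 where E: "openin X E1" "openin X E2" "?T \<subseteq> E1 \<union> E2"
      "E1 \<inter> E2 \<inter> ?T = {}" "E1 \<inter> ?T \<noteq> {}" "E2 \<inter> ?T \<noteq> {}"
      by blast
    have "x \<in> E1 \<or> x \<in> E2"
      using E(3) T by blast
    then show False
    proof
      assume "x \<in> E1"
      then show False
        using no_split[of E1 E2] E by blast
    next
      assume "x \<in> E2"
      then show False
        using no_split[of E2 E1] E by (simp add: Int_commute Un_commute)
    qed
  qed blast
qed

lemma open_tripartitions_not_crossing:
  assumes X: "connected_space X" and x: "x \<in> topspace X"
    and U: "open_tripartition X (topspace X - {x}) U1 U2 U3"
    and V: "open_tripartition X (topspace X - {y}) V1 V2 V3"
    and "y \<in> U1" "U2 \<inter> V2 \<noteq> {}" "U3 \<inter> V3 \<noteq> {}"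
  shows False
proof -
  let ?C = "topspace X - U1"
  have "connectedin X ?C"
    using U by (intro connectedin_diff_open_piece[OF X x, of U1 "U2 \<union> U3"])
      (auto simp: open_tripartition_def)
  moreover have "openin X V2" "openin X (V1 \<union> V3)"
    using V unfolding open_tripartition_def by auto
  moreover have "?C \<subseteq> V2 \<union> (V1 \<union> V3)"
    using V \<open>y \<in> U1\<close> unfolding open_tripartition_def by blast
  moreover have "V2 \<inter> (V1 \<union> V3) \<inter> ?C = {}"
    using V unfolding open_tripartition_def by blast
  moreover have "U2 \<union> U3 \<subseteq> ?C"
    using U unfolding open_tripartition_def by blast
  then have "V2 \<inter> ?C \<noteq> {}" "(V1 \<union> V3) \<inter> ?C \<noteq> {}"
    using \<open>U2 \<inter> V2 \<noteq> {}\<close> \<open>U3 \<inter> V3 \<noteq> {}\<close> by blast+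
  ultimately show False
    by (rule connectedinD)
qed

definition punctured_tripartition_marks :: "'a topology \<Rightarrow> 'a \<Rightarrow> 'a \<times> 'a \<times> 'a \<Rightarrow> bool" where
  "punctured_tripartition_marks X x p \<longleftrightarrow> (case p of (a, b, c) \<Rightarrow>
     \<exists>U1 U2 U3. open_tripartition X (topspace X - {x}) U1 U2 U3 \<and> a \<in> U1 \<and> b \<in> U2 \<and> c \<in> U3)"

lemma punctured_tripartition_marks_unique:
  assumes X: "connected_space X" and x: "x \<in> topspace X" and y: "y \<in> topspace X"
    and "punctured_tripartition_marks X x p" "punctured_tripartition_marks X y p"
  shows "x = y"
proof (rule ccontr)
  assume "x \<noteq> y"
  obtain a b c where p: "p = (a, b, c)"
    by (cases p) blast
  obtain U1 U2 U3 V1 V2 V3 where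
    U: "open_tripartition X (topspace X - {x}) U1 U2 U3" and
    V: "open_tripartition X (topspace X - {y}) V1 V2 V3" and
    marks: "a \<in> U1 \<inter> V1" "b \<in> U2 \<inter> V2" "c \<in> U3 \<inter> V3"
    using assms(4,5) unfolding punctured_tripartition_marks_def p by blast
  have "y \<in> U1 \<union> U2 \<union> U3"
    using U \<open>x \<noteq> y\<close> y unfolding open_tripartition_def by blast
  then consider "y \<in> U1" | "y \<in> U2" | "y \<in> U3"
    by blast
  then show False
  proof cases
    case 1
    with marks show False
      by (blast intro: open_tripartitions_not_crossing[OF X x U V])
  next
    case 2
    with marks show False
      by (blast intro: open_tripartitions_not_crossing[OF X x
            open_tripartition_swap12[OF U] open_tripartition_swap12[OF V]])
  next
    case 3
    with marks show False
      by (blast intro: open_tripartitions_not_crossing[OF X x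
            open_tripartition_swap13[OF U] open_tripartition_swap13[OF V]])
  qed
qed

lemma punctured_tripartition_marks_in_dense:
  assumes dense: "X closure_of D = topspace X"
    and U: "open_tripartition X (topspace X - {x}) U1 U2 U3"
  shows "\<exists>p \<in> D \<times> D \<times> D. punctured_tripartition_marks X x p"
proof -
  have meets: "\<exists>a. a \<in> D \<inter> V" if "openin X V" "V \<noteq> {}" for V
    using dense that unfolding dense_intersects_open by blast
  obtain a b c where "a \<in> D \<inter> U1" "b \<in> D \<inter> U2" "c \<in> D \<inter> U3"
    using meets[of U1] meets[of U2] meets[of U3] U unfolding open_tripartition_def by meson
  then have "(a, b, c) \<in> D \<times> D \<times> D" "punctured_tripartition_marks X x (a, b, c)"
    using U unfolding punctured_tripartition_marks_def by auto
  then show ?thesis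
    by blast
qed

lemma countable_if_uniquely_marked:
  assumes "countable M"
    and marked: "\<And>x. x \<in> S \<Longrightarrow> \<exists>m\<in>M. P x m"
    and unique: "\<And>x y m. x \<in> S \<Longrightarrow> y \<in> S \<Longrightarrow> P x m \<Longrightarrow> P y m \<Longrightarrow> x = y"
  shows "countable S"
proof -
  obtain f where f: "\<forall>x\<in>S. f x \<in> M \<and> P x (f x)"
    using bchoice[of S "\<lambda>x m. m \<in> M \<and> P x m"] marked by blast
  have "inj_on f S"
    using f unique by (intro inj_onI) metis
  moreover have "countable (f ` S)"
    using f assms(1) countable_subset[of "f ` S" M] by blast
  ultimately show ?thesis
    using countable_image_inj_on by blast
qed

theorem theorem7p3:
  fixes X :: "'a topology"
  assumes "connected_space X"
    and "separable_space X"
    and "t1_space X"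
  shows "countable {x \<in> topspace X.
           \<not> (finite (connected_components_of (subtopology X (topspace X - {x})))
              \<and> card (connected_components_of (subtopology X (topspace X - {x}))) \<le> 2)}"
    (is "countable ?S")
proof -
  obtain D where D: "countable D" "X closure_of D = topspace X"
    using assms(2) unfolding separable_space_def by blast
  show ?thesis
  proof (rule countable_if_uniquely_marked)
    show "countable (D \<times> D \<times> D)"
      using D(1) by simp
  next
    fix x
    assume x: "x \<in> ?S"
    have "closedin X {x}"
      using x assms(3) t1_space_closedin_singleton by fastforce
    then have "openin X (topspace X - {x})"
      by (rule openin_diff[OF openin_topspace])
    then obtain U1 U2 U3 where "open_tripartition X (topspace X - {x}) U1 U2 U3"
      using x by (auto elim: open_tripartition_if_many_components)
    with D(2) show "\<exists>p \<in> D \<times> D \<times> D. punctured_tripartition_marks X x p"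
      by (rule punctured_tripartition_marks_in_dense)
  next
    fix x y p
    assume "x \<in> ?S" "y \<in> ?S"
      and "punctured_tripartition_marks X x p" "punctured_tripartition_marks X y p"
    then show "x = y"
      using punctured_tripartition_marks_unique[OF assms(1)] by blast
  qed
qed

end
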